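(* Let $\mathbb{K}$ be a field, $m\ge 3$, $R=\mathbb{K}[T_1,\dots,T_m]$, and $I=\langle T_1^{a_1},\dots,T_m^{a_m},T_1^{b_1}\cdots T_m^{b_m}\rangle$ with $0\le b_i<a_i$ for all $i$, $b_i\ne0$ for at least two $i$, and additionally $|\mathbf{b}|=b_1+\cdots+b_m\le\min(a_1,\dots,a_m)$. Let $L\subset S=R[X_1,\dots,X_m,W]$ be the defining ideal of the Rees algebra of $I$. Then $\Gamma_0\cup\Gamma_3$, where $$\Gamma_0=\{\mathcal{P}(X_i,X_j)\mid 1\le j<i\le m+1\},\qquad \Gamma_3=\{\mathcal{P}(W^{|\mathbf{c}|},\mathbf{X}^{\mathbf{c}})\mid \mathbf{0}\ne\mathbf{c}\in\mathbb{N}^m,\ c_i\le b_i\text{ for all }i\},$$ is a (not necessarily reduced) Gröbner basis of $L$ with respect to $\tau$. In particular, $\operatorname{reltype}(I)\le|\mathbf{b}|$.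
   Context: Write $\mathbf{T}^{\mathbf{b}}=T_1^{b_1}\cdots T_m^{b_m}$. $L$ is the kernel of the $R$-algebra map $S\to R[Z]$, $X_i\mapsto T_i^{a_i}Z$, $W\mapsto\mathbf{T}^{\mathbf{b}}Z$; it is graded by total degree in $X_1,\dots,X_m,W$, $L=\bigoplus_{i\ge1}L_i$. Set $X_{m+1}:=W$; for $\mathbf{c}\in\mathbb{N}^m$, $\mathbf{X}^{\mathbf{c}}=\prod X_i^{c_i}$, $|\mathbf{c}|=\sum c_i$. Let $\Psi:S\to R$ be the $R$-algebra map $X_i\mapsto T_i^{a_i}$, $W\mapsto\mathbf{T}^{\mathbf{b}}$. For monomials $M,N$ in $X_1,\dots,X_m,W$, with $g=\gcd(\Psi(M),\Psi(N))$, set $\mathcal{P}(M,N)=\frac{\Psi(N)}{g}M-\frac{\Psi(M)}{g}N$. The order $\tau$ is lex on $S$ with $W>X_m>\cdots>X_1>T_1>\cdots>T_m$. The relation type is $\operatorname{reltype}(I)=\inf\{s\mid L=\langle L_1,\dots,L_s\rangle\}$. *)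

theory Defs
  imports Main "HOL-Library.Poly_Mapping" "HOL-Library.Extended_Nat"
begin

text \<open>Variables: TV k is T_k (1 <= k <= m), XV i is X_i (1 <= i <= m+1), where
  XV (m+1) plays the role of W = X_(m+1); ZV is the auxiliary variable Z of R[Z].\<close>
datatype var = TV nat | XV nat | ZV

type_synonym mon = "var \<Rightarrow>\<^sub>0 nat"
type_synonym 'k mpoly = "mon \<Rightarrow>\<^sub>0 'k"

definition mvar :: "var \<Rightarrow> 'k::comm_ring_1 mpoly" where
  "mvar v = Poly_Mapping.single (Poly_Mapping.single v 1) 1"

definition monom :: "mon \<Rightarrow> 'k::comm_ring_1 mpoly" where
  "monom \<alpha> = Poly_Mapping.single \<alpha> 1"

definition cst :: "'k::comm_ring_1 \<Rightarrow> 'k mpoly" where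
  "cst c = Poly_Mapping.single 0 c"

definition poly_subst :: "(var \<Rightarrow> 'k::comm_ring_1 mpoly) \<Rightarrow> 'k mpoly \<Rightarrow> 'k mpoly" where
  "poly_subst \<sigma> p = (\<Sum>mu\<in>Poly_Mapping.keys p. cst (Poly_Mapping.lookup p mu) * (\<Prod>v\<in>Poly_Mapping.keys mu. \<sigma> v ^ Poly_Mapping.lookup mu v))"

definition tmon :: "nat \<Rightarrow> (nat \<Rightarrow> nat) \<Rightarrow> mon" where
  "tmon m e = (\<Sum>k\<in>{1..m}. Poly_Mapping.single (TV k) (e k))"

fun valid_var :: "nat \<Rightarrow> var \<Rightarrow> bool" where
  "valid_var m (TV k) = (1 \<le> k \<and> k \<le> m)"
| "valid_var m (XV i) = (1 \<le> i \<and> i \<le> m + 1)"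
| "valid_var m ZV = False"

definition S_ring :: "nat \<Rightarrow> 'k::comm_ring_1 mpoly set" where
  "S_ring m = {f. \<forall>\<mu>\<in>Poly_Mapping.keys f. \<forall>v\<in>Poly_Mapping.keys \<mu>. valid_var m v}"

fun rees_map :: "nat \<Rightarrow> (nat \<Rightarrow> nat) \<Rightarrow> (nat \<Rightarrow> nat) \<Rightarrow> var \<Rightarrow> 'k::comm_ring_1 mpoly" where
  "rees_map m a b (TV k) = mvar (TV k)"
| "rees_map m a b (XV i) =
     (if i \<le> m then monom (Poly_Mapping.single (TV i) (a i) + Poly_Mapping.single ZV 1)
      else monom (tmon m b + Poly_Mapping.single ZV 1))"
| "rees_map m a b ZV = mvar ZV"

definition rees_ideal :: "nat \<Rightarrow> (nat \<Rightarrow> nat) \<Rightarrow> (nat \<Rightarrow> nat) \<Rightarrow> 'k::comm_ring_1 mpoly set" where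
  "rees_ideal m a b = {f \<in> S_ring m. poly_subst (rees_map m a b) f = 0}"

definition degXW :: "nat \<Rightarrow> mon \<Rightarrow> nat" where
  "degXW m \<mu> = (\<Sum>i\<in>{1..m+1}. Poly_Mapping.lookup \<mu> (XV i))"

definition graded_part :: "nat \<Rightarrow> 'k::comm_ring_1 mpoly set \<Rightarrow> nat \<Rightarrow> 'k mpoly set" where
  "graded_part m L i = {f \<in> L. \<forall>\<mu>\<in>Poly_Mapping.keys f. degXW m \<mu> = i}"

definition gen_ideal :: "'k::comm_ring_1 mpoly set \<Rightarrow> 'k mpoly set \<Rightarrow> 'k mpoly set" where
  "gen_ideal S A = {f. \<exists>(n::nat) r g. (\<forall>k<n. r k \<in> S \<and> g k \<in> A) \<and> f = (\<Sum>k<n. r k * g k)}"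

definition reltype :: "nat \<Rightarrow> (nat \<Rightarrow> nat) \<Rightarrow> (nat \<Rightarrow> nat) \<Rightarrow> 'k::comm_ring_1 itself \<Rightarrow> enat" where
  "reltype m a b (_::'k itself) =
     (INF s\<in>{s::nat. (rees_ideal m a b :: 'k mpoly set)
                = gen_ideal (S_ring m) (\<Union>i\<in>{1..s}. graded_part m (rees_ideal m a b) i)}. enat s)"

text \<open>Variable order of tau: W > X_m > ... > X_1 > T_1 > ... > T_m (Z smallest, irrelevant).\<close>
fun var_gt :: "var \<Rightarrow> var \<Rightarrow> bool" where
  "var_gt (XV i) (XV j) = (j < i)"
| "var_gt (XV i) (TV k) = True"
| "var_gt (XV i) ZV = True"
| "var_gt (TV k) (XV i) = False"
| "var_gt (TV k) (TV l) = (k < l)"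
| "var_gt (TV k) ZV = True"
| "var_gt ZV _ = False"

definition lex_less :: "mon \<Rightarrow> mon \<Rightarrow> bool" where
  "lex_less \<alpha> \<beta> = (\<exists>v. Poly_Mapping.lookup \<alpha> v < Poly_Mapping.lookup \<beta> v \<and> (\<forall>u. var_gt u v \<longrightarrow> Poly_Mapping.lookup \<alpha> u = Poly_Mapping.lookup \<beta> u))"

definition lead_mon :: "'k::comm_ring_1 mpoly \<Rightarrow> mon" where
  "lead_mon f = (THE \<alpha>. \<alpha> \<in> Poly_Mapping.keys f \<and> (\<forall>\<beta>\<in>Poly_Mapping.keys f. \<beta> \<noteq> \<alpha> \<longrightarrow> lex_less \<beta> \<alpha>))"

definition mon_dvd :: "mon \<Rightarrow> mon \<Rightarrow> bool" where
  "mon_dvd \<alpha> \<beta> = (\<forall>v. Poly_Mapping.lookup \<alpha> v \<le> Poly_Mapping.lookup \<beta> v)"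

definition is_groebner_basis :: "'k::comm_ring_1 mpoly set \<Rightarrow> 'k mpoly set \<Rightarrow> bool" where
  "is_groebner_basis G L = (finite G \<and> G \<subseteq> L \<and>
     (\<forall>f\<in>L. f \<noteq> 0 \<longrightarrow> (\<exists>g\<in>G. g \<noteq> 0 \<and> mon_dvd (lead_mon g) (lead_mon f))))"

definition psi_exp :: "nat \<Rightarrow> (nat \<Rightarrow> nat) \<Rightarrow> (nat \<Rightarrow> nat) \<Rightarrow> mon \<Rightarrow> nat \<Rightarrow> nat" where
  "psi_exp m a b \<mu> k = Poly_Mapping.lookup \<mu> (XV k) * a k + Poly_Mapping.lookup \<mu> (XV (m+1)) * b k"

text \<open>P(M,N) = (Psi(N)/g) M - (Psi(M)/g) N with g = gcd(Psi(M),Psi(N)).\<close>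
definition Pcal :: "nat \<Rightarrow> (nat \<Rightarrow> nat) \<Rightarrow> (nat \<Rightarrow> nat) \<Rightarrow> mon \<Rightarrow> mon \<Rightarrow> 'k::comm_ring_1 mpoly" where
  "Pcal m a b M N =
     (let pM = psi_exp m a b M; pN = psi_exp m a b N; g = (\<lambda>k. min (pM k) (pN k)) in
      monom (tmon m (\<lambda>k. pN k - g k) + M) - monom (tmon m (\<lambda>k. pM k - g k) + N))"

definition Xmon :: "nat \<Rightarrow> mon" where
  "Xmon i = Poly_Mapping.single (XV i) 1"

definition Gamma0 :: "nat \<Rightarrow> (nat \<Rightarrow> nat) \<Rightarrow> (nat \<Rightarrow> nat) \<Rightarrow> 'k::comm_ring_1 mpoly set" where
  "Gamma0 m a b = {Pcal m a b (Xmon i) (Xmon j) | i j. 1 \<le> j \<and> j < i \<and> i \<le> m + 1}"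

definition Gamma3 :: "nat \<Rightarrow> (nat \<Rightarrow> nat) \<Rightarrow> (nat \<Rightarrow> nat) \<Rightarrow> 'k::comm_ring_1 mpoly set" where
  "Gamma3 m a b = {Pcal m a b (Poly_Mapping.single (XV (m+1)) (\<Sum>i\<in>{1..m}. c i))
                               (\<Sum>i\<in>{1..m}. Poly_Mapping.single (XV i) (c i))
                   | c. (\<exists>i\<in>{1..m}. c i \<noteq> 0) \<and> (\<forall>i\<in>{1..m}. c i \<le> b i)}"

end

theory Submission
  imports Defs "HOL-Library.FuncSet"
begin

text \<open>\<open>L\<close> is the kernel of a monomial map, so it is spanned by the binomials \<open>\<mu> - \<nu>\<close> with \<open>\<mu>\<close>
  and \<open>\<nu>\<close> in a common fibre. Let \<open>\<nu> < \<mu>\<close> in \<open>\<tau>\<close>; then the \<open>W\<close>-exponent of \<open>\<mu>\<close> is at least that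
  of \<open>\<nu>\<close>. If they agree, comparing \<open>X\<close>-degrees and \<open>T\<close>-exponents yields \<open>j < i \<le> m\<close> such that
  \<open>X_i T_j^a_j\<close>, the leading term of \<open>\<P>(X_i, X_j)\<close>, divides \<open>\<mu>\<close>. If it drops by \<open>d > 0\<close> and some
  \<open>T_k\<close>-exponent \<open>\<alpha>_k\<close> of \<open>\<mu>\<close> is at least \<open>a_k - b_k\<close>, the leading term of \<open>\<P>(W, X_k)\<close> divides \<open>\<mu>\<close>.
  Otherwise the fibre equations give \<open>d \<le> \<Sum>_k \<lfloor>(\<alpha>_k + d b_k) / a_k\<rfloor>\<close>; since \<open>|b| \<le> a_k\<close> this
  inequality descends to some \<open>1 \<le> t \<le> |b|\<close>, and splitting \<open>t = |c|\<close> with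
  \<open>c_k \<le> \<lfloor>(\<alpha>_k + t b_k) / a_k\<rfloor> \<le> b_k\<close> gives an element \<open>\<P>(W^|c|, X^c)\<close> of \<open>\<Gamma>\<^sub>3\<close> whose leading
  term divides \<open>\<mu>\<close>. Moreover, replacing \<open>\<mu>\<close> by
  \<open>\<mu> - lead + trail\<close> lowers the weight \<open>\<Sum>_i i deg_X_i\<close>, so every fibre binomial, and thus \<open>L\<close>, lies
  in the ideal generated by \<open>\<Gamma>\<^sub>0 \<union> \<Gamma>\<^sub>3\<close>, whose elements have degree at most \<open>|b|\<close>.\<close>

abbreviation lookup :: "('a \<Rightarrow>\<^sub>0 'b::zero) \<Rightarrow> 'a \<Rightarrow> 'b" where
  "lookup \<equiv> Poly_Mapping.lookup"

abbreviation keys :: "('a \<Rightarrow>\<^sub>0 'b::zero) \<Rightarrow> 'a set" where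
  "keys \<equiv> Poly_Mapping.keys"

abbreviation single :: "'a \<Rightarrow> 'b::zero \<Rightarrow> 'a \<Rightarrow>\<^sub>0 'b" where
  "single \<equiv> Poly_Mapping.single"

section \<open>The lexicographic order \<open>\<tau>\<close>\<close>

lemma var_gt_irrefl: "\<not> var_gt v v"
  by (cases v) auto

lemma var_gt_trans: "var_gt u v \<Longrightarrow> var_gt v w \<Longrightarrow> var_gt u w"
  by (cases u; cases v; cases w) auto

lemma var_gt_total: "u \<noteq> v \<Longrightarrow> var_gt u v \<or> var_gt v u"
  by (cases u; cases v) auto

lemma finite_has_var_gt_maximal:
  assumes "finite D" "D \<noteq> {}"
  shows "\<exists>v\<in>D. \<forall>u\<in>D. \<not> var_gt u v"
  using assms
proof (induction D rule: finite_ne_induct)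
  case (singleton x)
  then show ?case by (simp add: var_gt_irrefl)
next
  case (insert x F)
  then obtain v where v: "v \<in> F" "\<forall>u\<in>F. \<not> var_gt u v" by blast
  show ?case
  proof (cases "var_gt x v")
    case True
    then have "\<forall>u\<in>insert x F. \<not> var_gt u x"
      using v var_gt_trans var_gt_irrefl by blast
    then show ?thesis by blast
  qed (use v in blast)
qed

lemma lex_less_irrefl: "\<not> lex_less \<alpha> \<alpha>"
  unfolding lex_less_def by auto

lemma lex_less_trans:
  assumes "lex_less \<alpha> \<beta>" "lex_less \<beta> \<gamma>"
  shows "lex_less \<alpha> \<gamma>"
proof -
  obtain v1 where a: "lookup \<alpha> v1 < lookup \<beta> v1" "\<forall>u. var_gt u v1 \<longrightarrow> lookup \<alpha> u = lookup \<beta> u"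
    using assms(1) unfolding lex_less_def by blast
  obtain v2 where b: "lookup \<beta> v2 < lookup \<gamma> v2" "\<forall>u. var_gt u v2 \<longrightarrow> lookup \<beta> u = lookup \<gamma> u"
    using assms(2) unfolding lex_less_def by blast
  consider "v1 = v2" | "var_gt v1 v2" | "var_gt v2 v1"
    using var_gt_total by blast
  then show ?thesis
  proof cases
    case 1
    with a b show ?thesis unfolding lex_less_def by (intro exI[of _ v1]) auto
  next
    case 2
    then have "lookup \<alpha> v1 < lookup \<gamma> v1" "\<forall>u. var_gt u v1 \<longrightarrow> lookup \<alpha> u = lookup \<gamma> u"
      using a b var_gt_trans by auto
    then show ?thesis unfolding lex_less_def by blast
  next
    case 3
    then have "lookup \<alpha> v2 < lookup \<gamma> v2" "\<forall>u. var_gt u v2 \<longrightarrow> lookup \<alpha> u = lookup \<gamma> u"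
      using a b var_gt_trans by auto
    then show ?thesis unfolding lex_less_def by blast
  qed
qed

lemma lex_less_asym: "lex_less \<alpha> \<beta> \<Longrightarrow> \<not> lex_less \<beta> \<alpha>"
  using lex_less_trans lex_less_irrefl by blast

lemma lex_less_total:
  assumes "\<alpha> \<noteq> \<beta>"
  shows "lex_less \<alpha> \<beta> \<or> lex_less \<beta> \<alpha>"
proof -
  let ?D = "{v. lookup \<alpha> v \<noteq> lookup \<beta> v}"
  have "?D \<subseteq> keys \<alpha> \<union> keys \<beta>"
    by (auto simp: in_keys_iff)
  then have "finite ?D"
    by (rule finite_subset) simp
  moreover have "?D \<noteq> {}"
    using assms by (auto intro: poly_mapping_eqI)
  ultimately obtain v where v: "v \<in> ?D" "\<forall>u\<in>?D. \<not> var_gt u v"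
    using finite_has_var_gt_maximal by blast
  then have above: "\<forall>u. var_gt u v \<longrightarrow> lookup \<alpha> u = lookup \<beta> u"
    by blast
  consider "lookup \<alpha> v < lookup \<beta> v" | "lookup \<beta> v < lookup \<alpha> v"
    using v(1) by fastforce
  then show ?thesis
    unfolding lex_less_def using above by (cases; metis)
qed

lemma finite_has_lex_maximum:
  assumes "finite K" "K \<noteq> {}"
  shows "\<exists>A\<in>K. \<forall>B\<in>K. B \<noteq> A \<longrightarrow> lex_less B A"
  using assms
proof (induction K rule: finite_ne_induct)
  case (insert x F)
  then obtain A where A: "A \<in> F" "\<forall>B\<in>F. B \<noteq> A \<longrightarrow> lex_less B A" by blast
  have "x \<noteq> A"
    using insert.hyps A(1) by blast
  then consider "lex_less x A" | "lex_less A x"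
    using lex_less_total by blast
  then show ?case
  proof cases
    case 1
    then show ?thesis using A by auto
  next
    case 2
    have "lex_less B x" if "B \<in> F" for B
      using A 2 that lex_less_trans by (cases "B = A") blast+
    then have "\<forall>B\<in>insert x F. B \<noteq> x \<longrightarrow> lex_less B x"
      by blast
    then show ?thesis by blast
  qed
qed simp

lemma lead_mon_eqI:
  assumes "A \<in> keys f" "\<forall>B\<in>keys f. B \<noteq> A \<longrightarrow> lex_less B A"
  shows "lead_mon f = A"
  unfolding lead_mon_def
proof (rule the_equality)
  fix A' assume A': "A' \<in> keys f \<and> (\<forall>B\<in>keys f. B \<noteq> A' \<longrightarrow> lex_less B A')"
  show "A' = A"
  proof (rule ccontr)
    assume "A' \<noteq> A"
    then have "lex_less A A'" "lex_less A' A"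
      using A' assms by auto
    then show False
      using lex_less_asym by blast
  qed
qed (use assms in blast)

lemma lead_mon_greatest:
  assumes "f \<noteq> 0"
  shows "lead_mon f \<in> keys f" "\<forall>B\<in>keys f. B \<noteq> lead_mon f \<longrightarrow> lex_less B (lead_mon f)"
proof -
  obtain A where "A \<in> keys f" "\<forall>B\<in>keys f. B \<noteq> A \<longrightarrow> lex_less B A"
    using finite_has_lex_maximum[of "keys f"] assms by auto
  moreover from this have "lead_mon f = A"
    by (rule lead_mon_eqI)
  ultimately show "lead_mon f \<in> keys f" "\<forall>B\<in>keys f. B \<noteq> lead_mon f \<longrightarrow> lex_less B (lead_mon f)"
    by simp_all
qed

lemma lookup_monom_diff:
  "lookup (monom A - monom B :: 'k::comm_ring_1 mpoly) x = (if x = A then 1 else 0) - (if x = B then 1 else 0)"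
  by (simp add: monom_def lookup_minus lookup_single when_def eq_commute)

lemma keys_monom_diff:
  assumes "A \<noteq> B"
  shows "keys (monom A - monom B :: 'k::comm_ring_1 mpoly) = {A, B}"
  using assms by (auto simp: in_keys_iff lookup_monom_diff split: if_splits)

lemma monom_diff_neq_0:
  assumes "A \<noteq> B"
  shows "monom A - monom B \<noteq> (0 :: 'k::comm_ring_1 mpoly)"
proof -
  have "A \<in> keys (monom A - monom B :: 'k mpoly)"
    using keys_monom_diff[OF assms] by blast
  then show ?thesis
    by (intro notI) simp
qed

lemma lead_mon_monom_diff:
  assumes "lex_less B A"
  shows "lead_mon (monom A - monom B :: 'k::comm_ring_1 mpoly) = A"
proof -
  have "A \<noteq> B"
    using assms lex_less_irrefl by blast
  then show ?thesis
    using assms by (intro lead_mon_eqI) (auto simp: keys_monom_diff)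
qed

section \<open>The Rees map on monomials\<close>

fun var_mon :: "nat \<Rightarrow> (nat \<Rightarrow> nat) \<Rightarrow> (nat \<Rightarrow> nat) \<Rightarrow> var \<Rightarrow> mon" where
  "var_mon m a b (TV k) = single (TV k) 1"
| "var_mon m a b (XV i) = (if i \<le> m then single (TV i) (a i) + single ZV 1
                           else tmon m b + single ZV 1)"
| "var_mon m a b ZV = single ZV 1"

lemma rees_map_eq_single: "rees_map m a b v = single (var_mon m a b v) 1"
  by (cases v) (simp_all add: mvar_def monom_def)

definition mon_scale :: "nat \<Rightarrow> mon \<Rightarrow> mon" where
  "mon_scale n \<alpha> = Poly_Mapping.map ((*) n) \<alpha>"

lemma lookup_mon_scale: "lookup (mon_scale n \<alpha>) x = n * lookup \<alpha> x"
  by (simp add: mon_scale_def Poly_Mapping.map.rep_eq when_def)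

lemma single_one_power: "single \<alpha> (1::'k::comm_ring_1) ^ n = single (mon_scale n \<alpha>) 1"
proof (induction n)
  case 0
  have "mon_scale 0 \<alpha> = 0"
    by (rule poly_mapping_eqI) (simp add: lookup_mon_scale)
  then show ?case by simp
next
  case (Suc n)
  have "\<alpha> + mon_scale n \<alpha> = mon_scale (Suc n) \<alpha>"
    by (rule poly_mapping_eqI) (simp add: lookup_mon_scale lookup_add)
  then show ?case using Suc by (simp add: mult_single)
qed

lemma prod_single_one:
  "finite K \<Longrightarrow> (\<Prod>v\<in>K. single (f v) (1::'k::comm_ring_1)) = single (\<Sum>v\<in>K. f v) 1"
  by (induction K rule: finite_induct) (simp_all add: mult_single)

definition rees_mon :: "nat \<Rightarrow> (nat \<Rightarrow> nat) \<Rightarrow> (nat \<Rightarrow> nat) \<Rightarrow> mon \<Rightarrow> mon" where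
  "rees_mon m a b \<mu> = (\<Sum>v\<in>keys \<mu>. mon_scale (lookup \<mu> v) (var_mon m a b v))"

definition rees_poly :: "nat \<Rightarrow> (nat \<Rightarrow> nat) \<Rightarrow> (nat \<Rightarrow> nat) \<Rightarrow> 'k::comm_ring_1 mpoly \<Rightarrow> 'k mpoly" where
  "rees_poly m a b p = (\<Sum>\<mu>\<in>keys p. single (rees_mon m a b \<mu>) (lookup p \<mu>))"

lemma poly_subst_rees_map: "poly_subst (rees_map m a b) p = rees_poly m a b p"
  unfolding poly_subst_def rees_poly_def
proof (rule sum.cong[OF refl])
  fix \<mu>
  have "(\<Prod>v\<in>keys \<mu>. rees_map m a b v ^ lookup \<mu> v) = single (rees_mon m a b \<mu>) (1::'a)"
    by (simp add: rees_map_eq_single single_one_power prod_single_one rees_mon_def)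
  then show "cst (lookup p \<mu>) * (\<Prod>v\<in>keys \<mu>. rees_map m a b v ^ lookup \<mu> v)
      = single (rees_mon m a b \<mu>) (lookup p \<mu>)"
    by (simp add: cst_def mult_single)
qed

lemma lookup_rees_mon_superset:
  assumes "finite K" "keys \<mu> \<subseteq> K"
  shows "lookup (rees_mon m a b \<mu>) x = (\<Sum>v\<in>K. lookup \<mu> v * lookup (var_mon m a b v) x)"
proof -
  have "lookup (rees_mon m a b \<mu>) x = (\<Sum>v\<in>keys \<mu>. lookup \<mu> v * lookup (var_mon m a b v) x)"
    by (simp add: rees_mon_def lookup_sum lookup_mon_scale)
  also have "\<dots> = (\<Sum>v\<in>K. lookup \<mu> v * lookup (var_mon m a b v) x)"
    by (rule sum.mono_neutral_left) (use assms in \<open>auto simp: in_keys_iff\<close>)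
  finally show ?thesis .
qed

lemma rees_mon_add: "rees_mon m a b (\<mu> + \<nu>) = rees_mon m a b \<mu> + rees_mon m a b \<nu>"
proof (rule poly_mapping_eqI)
  fix x
  let ?K = "keys \<mu> \<union> keys \<nu>"
  have "keys (\<mu> + \<nu>) \<subseteq> ?K"
    by (rule keys_add)
  then show "lookup (rees_mon m a b (\<mu> + \<nu>)) x = lookup (rees_mon m a b \<mu> + rees_mon m a b \<nu>) x"
    by (simp add: lookup_rees_mon_superset[of ?K] lookup_add algebra_simps sum.distrib)
qed

lemma rees_poly_zero [simp]: "rees_poly m a b 0 = 0"
  by (simp add: rees_poly_def)

lemma rees_poly_add: "rees_poly m a b (p + q) = rees_poly m a b p + rees_poly m a b q"
  unfolding rees_poly_def by (rule setsum_keys_plus_distrib) (simp_all add: single_add)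

lemma rees_poly_single: "rees_poly m a b (single \<mu> c) = single (rees_mon m a b \<mu>) c"
  by (cases "c = 0") (simp_all add: rees_poly_def)

lemma rees_poly_diff: "rees_poly m a b (p - q) = rees_poly m a b p - rees_poly m a b q"
  using rees_poly_add[of m a b "p - q" q] by (simp add: eq_diff_eq)

lemma lookup_rees_poly:
  "lookup (rees_poly m a b f) \<theta> = (\<Sum>\<mu>\<in>keys f. if rees_mon m a b \<mu> = \<theta> then lookup f \<mu> else 0)"
  by (simp add: rees_poly_def lookup_sum lookup_single when_def)

lemma update_eq_add_single:
  "k \<notin> keys f \<Longrightarrow> Poly_Mapping.update k v f = f + single k v"
  by (rule poly_mapping_eqI) (auto simp: lookup_update lookup_add lookup_single when_def in_keys_iff)

lemma rees_poly_single_mult: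
  "rees_poly m a b (single \<mu> c * q) = single (rees_mon m a b \<mu>) c * rees_poly m a b (q::'k::comm_ring_1 mpoly)"
proof (induction q rule: update_induct)
  case (update f k v)
  then show ?case
    by (simp add: update_eq_add_single distrib_left rees_poly_add mult_single rees_poly_single rees_mon_add)
qed simp

lemma rees_poly_mult:
  "rees_poly m a b (p * q) = rees_poly m a b p * rees_poly m a b (q::'k::comm_ring_1 mpoly)"
proof (induction p rule: update_induct)
  case (update f k v)
  then show ?case
    by (simp add: update_eq_add_single distrib_right rees_poly_add rees_poly_single_mult rees_poly_single)
qed simp

definition S_mon :: "nat \<Rightarrow> mon \<Rightarrow> bool" where
  "S_mon m \<mu> \<longleftrightarrow> (\<forall>v\<in>keys \<mu>. valid_var m v)"

lemma S_ring_iff_S_mon: "f \<in> S_ring m \<longleftrightarrow> (\<forall>\<mu>\<in>keys f. S_mon m \<mu>)"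
  unfolding S_ring_def S_mon_def by simp

lemma S_mon_add: "S_mon m \<mu> \<Longrightarrow> S_mon m \<nu> \<Longrightarrow> S_mon m (\<mu> + \<nu>)"
  unfolding S_mon_def using keys_add[of \<mu> \<nu>] by blast

lemma S_mon_diff: "S_mon m \<mu> \<Longrightarrow> S_mon m (\<mu> - \<nu>)"
  unfolding S_mon_def by (auto simp: in_keys_iff lookup_minus)

lemma S_mon_lookup_eq_0: "S_mon m \<mu> \<Longrightarrow> \<not> valid_var m v \<Longrightarrow> lookup \<mu> v = 0"
  unfolding S_mon_def by (auto simp: in_keys_iff)

lemma S_mon_keys_subset: "S_mon m \<mu> \<Longrightarrow> keys \<mu> \<subseteq> TV ` {1..m} \<union> XV ` {1..m+1}"
  unfolding S_mon_def by (auto elim!: valid_var.elims)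

lemma lookup_tmon: "lookup (tmon m e) v = (case v of TV k \<Rightarrow> if k \<in> {1..m} then e k else 0 | _ \<Rightarrow> 0)"
  by (cases v) (simp_all add: tmon_def lookup_sum lookup_single when_def)

lemma tmon_cong: "(\<And>k. k \<in> {1..m} \<Longrightarrow> e k = e' k) \<Longrightarrow> tmon m e = tmon m e'"
  unfolding tmon_def by (rule sum.cong) auto

lemma lookup_rees_mon:
  assumes "S_mon m \<mu>"
  shows "lookup (rees_mon m a b \<mu>) x = (\<Sum>k\<in>{1..m}. lookup \<mu> (TV k) * lookup (var_mon m a b (TV k)) x)
    + (\<Sum>i\<in>{1..m+1}. lookup \<mu> (XV i) * lookup (var_mon m a b (XV i)) x)"
proof -
  have "lookup (rees_mon m a b \<mu>) x
      = (\<Sum>v\<in>TV ` {1..m} \<union> XV ` {1..m+1}. lookup \<mu> v * lookup (var_mon m a b v) x)"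
    using S_mon_keys_subset[OF assms] by (intro lookup_rees_mon_superset) auto
  also have "\<dots> = (\<Sum>v\<in>TV ` {1..m}. lookup \<mu> v * lookup (var_mon m a b v) x)
      + (\<Sum>v\<in>XV ` {1..m+1}. lookup \<mu> v * lookup (var_mon m a b v) x)"
    by (rule sum.union_disjoint) auto
  finally show ?thesis
    by (simp add: sum.reindex inj_on_def)
qed

lemma rees_mon_eq:
  assumes "S_mon m \<mu>"
  shows "rees_mon m a b \<mu>
    = tmon m (\<lambda>k. lookup \<mu> (TV k) + psi_exp m a b \<mu> k) + single ZV (degXW m \<mu>)"
proof (rule poly_mapping_eqI)
  fix x
  show "lookup (rees_mon m a b \<mu>) x
    = lookup (tmon m (\<lambda>k. lookup \<mu> (TV k) + psi_exp m a b \<mu> k) + single ZV (degXW m \<mu>)) x"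
  proof (cases x)
    case (TV j)
    then show ?thesis
      by (simp add: lookup_rees_mon[OF assms] lookup_add lookup_tmon lookup_single when_def
          psi_exp_def if_distrib[of "(*) _"] sum.If_cases cong: if_cong)
  next
    case (XV l)
    then show ?thesis
      by (simp add: lookup_rees_mon[OF assms] lookup_add lookup_tmon lookup_single when_def)
  next
    case ZV
    then show ?thesis
      by (simp add: lookup_rees_mon[OF assms] lookup_add lookup_tmon lookup_single when_def degXW_def)
  qed
qed

lemma rees_mon_eq_imp_T_exponent_eq:
  assumes "S_mon m \<mu>" "S_mon m \<nu>" "rees_mon m a b \<mu> = rees_mon m a b \<nu>" "k \<in> {1..m}"
  shows "lookup \<mu> (TV k) + psi_exp m a b \<mu> k = lookup \<nu> (TV k) + psi_exp m a b \<nu> k"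
  using arg_cong[OF assms(3), of "\<lambda>\<theta>. lookup \<theta> (TV k)"] assms(4)
  by (simp add: rees_mon_eq[OF assms(1)] rees_mon_eq[OF assms(2)] lookup_add lookup_tmon lookup_single)

lemma rees_mon_eq_imp_degXW_eq:
  assumes "S_mon m \<mu>" "S_mon m \<nu>" "rees_mon m a b \<mu> = rees_mon m a b \<nu>"
  shows "degXW m \<mu> = degXW m \<nu>"
  using arg_cong[OF assms(3), of "\<lambda>\<theta>. lookup \<theta> ZV"]
  by (simp add: rees_mon_eq[OF assms(1)] rees_mon_eq[OF assms(2)] lookup_add lookup_tmon lookup_single)

lemma gen_ideal_zero: "0 \<in> gen_ideal S A"
  unfolding gen_ideal_def by (rule CollectI, rule exI[of _ 0]) simp

lemma gen_ideal_generator_mult: "r \<in> S \<Longrightarrow> g \<in> A \<Longrightarrow> r * g \<in> gen_ideal S A"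
  unfolding gen_ideal_def
  by (rule CollectI, rule exI[of _ 1], rule exI[of _ "\<lambda>_. r"], rule exI[of _ "\<lambda>_. g"]) simp

lemma gen_ideal_add:
  assumes "f \<in> gen_ideal S A" "f' \<in> gen_ideal S A"
  shows "f + f' \<in> gen_ideal S A"
proof -
  obtain n :: nat and r g where 1: "\<forall>k<n. r k \<in> S \<and> g k \<in> A" "f = (\<Sum>k<n. r k * g k)"
    using assms(1) unfolding gen_ideal_def by blast
  obtain n' :: nat and r' g' where 2: "\<forall>k<n'. r' k \<in> S \<and> g' k \<in> A" "f' = (\<Sum>k<n'. r' k * g' k)"
    using assms(2) unfolding gen_ideal_def by blast
  define R where "R k = (if k < n then r k else r' (k - n))" for k
  define G where "G k = (if k < n then g k else g' (k - n))" for k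
  have "(\<Sum>k<n + n'. R k * G k) = (\<Sum>k<n. R k * G k) + (\<Sum>k<n'. R (k + n) * G (k + n))"
    by (induction n') (simp_all add: ac_simps)
  also have "\<dots> = f + f'"
    unfolding 1(2) 2(2) R_def G_def by simp
  finally have "f + f' = (\<Sum>k<n + n'. R k * G k)" ..
  moreover have "\<forall>k<n + n'. R k \<in> S \<and> G k \<in> A"
    using 1(1) 2(1) unfolding R_def G_def by auto
  ultimately show ?thesis
    unfolding gen_ideal_def by blast
qed

lemma gen_ideal_sum:
  "finite I \<Longrightarrow> (\<And>i. i \<in> I \<Longrightarrow> h i \<in> gen_ideal S A) \<Longrightarrow> sum h I \<in> gen_ideal S A"
  by (induction I rule: finite_induct) (simp_all add: gen_ideal_zero gen_ideal_add)

lemma gen_ideal_mono: "A \<subseteq> A' \<Longrightarrow> gen_ideal S A \<subseteq> gen_ideal S A'"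
  unfolding gen_ideal_def by blast

lemma rees_ideal_iff: "f \<in> rees_ideal m a b \<longleftrightarrow> f \<in> S_ring m \<and> rees_poly m a b f = 0"
  by (simp add: rees_ideal_def poly_subst_rees_map)

lemma S_ring_add: "p \<in> S_ring m \<Longrightarrow> q \<in> S_ring m \<Longrightarrow> p + q \<in> S_ring m"
  unfolding S_ring_iff_S_mon using keys_add[of p q] by blast

lemma S_ring_mult: "p \<in> S_ring m \<Longrightarrow> q \<in> S_ring m \<Longrightarrow> p * q \<in> S_ring m"
  unfolding S_ring_iff_S_mon using keys_mult[of p q] S_mon_add by blast

lemma gen_ideal_subset_rees_ideal:
  assumes "A \<subseteq> rees_ideal m a b"
  shows "gen_ideal (S_ring m) A \<subseteq> rees_ideal m a b"
proof
  fix f assume "f \<in> gen_ideal (S_ring m) A"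
  then obtain n :: nat and r g where h: "\<forall>k<n. r k \<in> S_ring m \<and> g k \<in> A" "f = (\<Sum>k<n. r k * g k)"
    unfolding gen_ideal_def by blast
  from h(1) have "(\<Sum>k<n. r k * g k) \<in> rees_ideal m a b"
  proof (induction n)
    case 0
    then show ?case by (simp add: rees_ideal_iff S_ring_def)
  next
    case (Suc n)
    then show ?case
      using assms by (auto simp: rees_ideal_iff S_ring_add S_ring_mult rees_poly_add rees_poly_mult)
  qed
  with h(2) show "f \<in> rees_ideal m a b" by simp
qed

section \<open>The binomials \<open>\<P>(M, N)\<close>\<close>

definition XW_mon :: "nat \<Rightarrow> mon \<Rightarrow> bool" where
  "XW_mon m M \<longleftrightarrow> keys M \<subseteq> XV ` {1..m+1}"

definition Pcal_lead :: "nat \<Rightarrow> (nat \<Rightarrow> nat) \<Rightarrow> (nat \<Rightarrow> nat) \<Rightarrow> mon \<Rightarrow> mon \<Rightarrow> mon" where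
  "Pcal_lead m a b M N = tmon m (\<lambda>k. psi_exp m a b N k - min (psi_exp m a b M k) (psi_exp m a b N k)) + M"

definition Pcal_trail :: "nat \<Rightarrow> (nat \<Rightarrow> nat) \<Rightarrow> (nat \<Rightarrow> nat) \<Rightarrow> mon \<Rightarrow> mon \<Rightarrow> mon" where
  "Pcal_trail m a b M N = tmon m (\<lambda>k. psi_exp m a b M k - min (psi_exp m a b M k) (psi_exp m a b N k)) + N"

lemma Pcal_eq: "Pcal m a b M N = monom (Pcal_lead m a b M N) - monom (Pcal_trail m a b M N)"
  by (simp add: Pcal_def Pcal_lead_def Pcal_trail_def Let_def)

lemma XW_mon_lookup_eq_0: "XW_mon m M \<Longrightarrow> v \<notin> XV ` {1..m+1} \<Longrightarrow> lookup M v = 0"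
  unfolding XW_mon_def by (metis in_keys_iff subsetD)

lemma XW_mon_imp_S_mon: "XW_mon m M \<Longrightarrow> S_mon m M"
  unfolding XW_mon_def S_mon_def by auto

lemma S_mon_tmon: "S_mon m (tmon m e)"
  unfolding S_mon_def by (auto simp: in_keys_iff lookup_tmon split: var.splits if_splits)

lemma S_mon_tmon_add: "XW_mon m M \<Longrightarrow> S_mon m (tmon m e + M)"
  by (rule S_mon_add[OF S_mon_tmon XW_mon_imp_S_mon])

lemma lookup_tmon_add:
  assumes "XW_mon m M"
  shows "lookup (tmon m e + M) v = (case v of TV k \<Rightarrow> if k \<in> {1..m} then e k else 0 | _ \<Rightarrow> lookup M v)"
  using XW_mon_lookup_eq_0[OF assms] by (cases v) (auto simp: lookup_add lookup_tmon)

lemma lookup_tmon_add_XV [simp]: "lookup (tmon m e + M) (XV i) = lookup M (XV i)"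
  by (simp add: lookup_add lookup_tmon)

lemma psi_exp_tmon_add [simp]: "psi_exp m a b (tmon m e + M) = psi_exp m a b M"
  by (rule ext) (simp add: psi_exp_def)

lemma degXW_tmon_add [simp]: "degXW m (tmon m e + M) = degXW m M"
  by (simp add: degXW_def)

definition x_weight :: "nat \<Rightarrow> mon \<Rightarrow> nat" where
  "x_weight m \<mu> = (\<Sum>i\<in>{1..m+1}. i * lookup \<mu> (XV i))"

lemma x_weight_add: "x_weight m (\<mu> + \<nu>) = x_weight m \<mu> + x_weight m \<nu>"
  by (simp add: x_weight_def lookup_add algebra_simps sum.distrib)

lemma x_weight_tmon_add [simp]: "x_weight m (tmon m e + M) = x_weight m M"
  by (simp add: x_weight_def)

lemma rees_mon_tmon_add:
  assumes "XW_mon m M"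
  shows "rees_mon m a b (tmon m e + M) = tmon m (\<lambda>k. e k + psi_exp m a b M k) + single ZV (degXW m M)"
proof -
  have "tmon m (\<lambda>k. lookup (tmon m e + M) (TV k) + psi_exp m a b M k) = tmon m (\<lambda>k. e k + psi_exp m a b M k)"
    by (rule tmon_cong) (simp add: lookup_tmon_add[OF assms])
  then show ?thesis
    by (simp add: rees_mon_eq S_mon_tmon_add[OF assms])
qed

lemma rees_mon_Pcal_lead_eq_trail:
  assumes "XW_mon m M" "XW_mon m N" "degXW m M = degXW m N"
  shows "rees_mon m a b (Pcal_lead m a b M N) = rees_mon m a b (Pcal_trail m a b M N)"
  unfolding Pcal_lead_def Pcal_trail_def rees_mon_tmon_add[OF assms(1)] rees_mon_tmon_add[OF assms(2)]
  using assms(3) by (simp add: min_def add.commute)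

text \<open>The drop in \<open>x_weight\<close> makes the reduction of fibre binomials terminate.\<close>

definition rees_binomial :: "nat \<Rightarrow> (nat \<Rightarrow> nat) \<Rightarrow> (nat \<Rightarrow> nat) \<Rightarrow> mon \<Rightarrow> mon \<Rightarrow> bool" where
  "rees_binomial m a b A B \<longleftrightarrow> lex_less B A \<and> S_mon m A \<and> S_mon m B
     \<and> rees_mon m a b A = rees_mon m a b B \<and> x_weight m B < x_weight m A"

lemma rees_binomial_Pcal:
  assumes "XW_mon m M" "XW_mon m N" "degXW m M = degXW m N" "x_weight m N < x_weight m M"
    and "lex_less (Pcal_trail m a b M N) (Pcal_lead m a b M N)"
  shows "rees_binomial m a b (Pcal_lead m a b M N) (Pcal_trail m a b M N)"
  unfolding rees_binomial_def
  using assms rees_mon_Pcal_lead_eq_trail[OF assms(1-3)]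
  by (simp add: Pcal_lead_def Pcal_trail_def S_mon_tmon_add)

lemma rees_binomial_in_graded_part:
  assumes "rees_binomial m a b A B"
  shows "(monom A - monom B :: 'k::comm_ring_1 mpoly) \<in> graded_part m (rees_ideal m a b) (degXW m A)"
proof -
  have A: "A \<noteq> B" "S_mon m A" "S_mon m B" "rees_mon m a b A = rees_mon m a b B"
    using assms lex_less_irrefl unfolding rees_binomial_def by metis+
  have "degXW m A = degXW m B"
    by (rule rees_mon_eq_imp_degXW_eq[OF A(2-4)])
  moreover have "keys (monom A - monom B :: 'k mpoly) = {A, B}"
    using A(1) by (rule keys_monom_diff)
  moreover have "rees_poly m a b (monom A - monom B :: 'k mpoly) = 0"
    using A(4) by (simp add: monom_def rees_poly_diff rees_poly_single)
  ultimately show ?thesis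
    using A(2,3) by (auto simp: graded_part_def rees_ideal_iff S_ring_iff_S_mon)
qed

definition Wpow :: "nat \<Rightarrow> nat \<Rightarrow> mon" where
  "Wpow m t = single (XV (m+1)) t"

definition Xpow :: "nat \<Rightarrow> (nat \<Rightarrow> nat) \<Rightarrow> mon" where
  "Xpow m c = (\<Sum>i\<in>{1..m}. single (XV i) (c i))"

lemma lookup_Xmon: "lookup (Xmon i) v = (if v = XV i then 1 else 0)"
  by (simp add: Xmon_def lookup_single when_def eq_commute)

lemma lookup_Wpow: "lookup (Wpow m t) v = (if v = XV (m+1) then t else 0)"
  by (simp add: Wpow_def lookup_single when_def eq_commute)

lemma lookup_Xpow: "lookup (Xpow m c) v = (case v of XV l \<Rightarrow> if l \<in> {1..m} then c l else 0 | _ \<Rightarrow> 0)"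
  by (cases v) (simp_all add: Xpow_def lookup_sum lookup_single when_def if_distrib cong: if_cong)

lemma XW_mon_iff_lookup: "XW_mon m M \<longleftrightarrow> (\<forall>v. lookup M v \<noteq> 0 \<longrightarrow> v \<in> XV ` {1..m+1})"
  unfolding XW_mon_def by (auto simp: in_keys_iff)

lemma XW_mon_Xmon: "i \<in> {1..m+1} \<Longrightarrow> XW_mon m (Xmon i)"
  by (simp add: XW_mon_iff_lookup lookup_Xmon)

lemma XW_mon_Wpow: "XW_mon m (Wpow m t)"
  by (simp add: XW_mon_iff_lookup lookup_Wpow)

lemma XW_mon_Xpow: "XW_mon m (Xpow m c)"
  by (auto simp: XW_mon_iff_lookup lookup_Xpow split: var.splits if_splits)

lemma degXW_Xmon: "i \<in> {1..m+1} \<Longrightarrow> degXW m (Xmon i) = 1"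
  by (simp add: degXW_def lookup_Xmon if_distrib cong: if_cong)

lemma degXW_Wpow: "degXW m (Wpow m t) = t"
  by (simp add: degXW_def lookup_Wpow)

lemma degXW_Xpow: "degXW m (Xpow m c) = (\<Sum>i\<in>{1..m}. c i)"
  by (simp add: degXW_def lookup_Xpow)

lemma x_weight_Xmon: "i \<in> {1..m+1} \<Longrightarrow> x_weight m (Xmon i) = i"
  by (simp add: x_weight_def lookup_Xmon if_distrib cong: if_cong)

lemma x_weight_Wpow: "x_weight m (Wpow m t) = (m+1) * t"
  by (simp add: x_weight_def lookup_Wpow)

lemma x_weight_Xpow: "x_weight m (Xpow m c) = (\<Sum>i\<in>{1..m}. i * c i)"
  by (simp add: x_weight_def lookup_Xpow)

lemma psi_exp_Xmon: "k \<le> m \<Longrightarrow> psi_exp m a b (Xmon j) k = (if k = j then a k else 0) + (if j = m + 1 then b k else 0)"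
  by (simp add: psi_exp_def lookup_Xmon)

lemma psi_exp_Wpow: "k \<le> m \<Longrightarrow> psi_exp m a b (Wpow m t) k = t * b k"
  by (simp add: psi_exp_def lookup_Wpow)

lemma psi_exp_Xpow: "k \<in> {1..m} \<Longrightarrow> psi_exp m a b (Xpow m c) k = c k * a k"
  by (simp add: psi_exp_def lookup_Xpow)

definition Gamma_pairs :: "nat \<Rightarrow> (nat \<Rightarrow> nat) \<Rightarrow> (mon \<times> mon) set" where
  "Gamma_pairs m b = {(Xmon i, Xmon j) | i j. 1 \<le> j \<and> j < i \<and> i \<le> m + 1}
     \<union> {(Wpow m (\<Sum>i\<in>{1..m}. c i), Xpow m c) | c. (\<exists>i\<in>{1..m}. c i \<noteq> 0) \<and> (\<forall>i\<in>{1..m}. c i \<le> b i)}"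

lemma Gamma_eq_Pcal_image: "Gamma0 m a b \<union> Gamma3 m a b = (\<lambda>(M, N). Pcal m a b M N) ` Gamma_pairs m b"
  unfolding Gamma0_def Gamma3_def Gamma_pairs_def Wpow_def Xpow_def by (auto; force)

lemma finite_Gamma_pairs: "finite (Gamma_pairs m b)"
proof -
  have "{(Xmon i, Xmon j) | i j. 1 \<le> j \<and> j < i \<and> i \<le> m + 1}
      \<subseteq> (\<lambda>(i, j). (Xmon i, Xmon j)) ` ({0..m+1} \<times> {0..m+1})"
    by force
  then have "finite {(Xmon i, Xmon j) | i j. 1 \<le> j \<and> j < i \<and> i \<le> m + 1}"
    by (rule finite_subset) simp
  moreover have "{(Wpow m (\<Sum>i\<in>{1..m}. c i), Xpow m c) | c. (\<exists>i\<in>{1..m}. c i \<noteq> 0) \<and> (\<forall>i\<in>{1..m}. c i \<le> b i)}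
      \<subseteq> (\<lambda>c. (Wpow m (\<Sum>i\<in>{1..m}. c i), Xpow m c)) ` PiE {1..m} (\<lambda>i. {0..b i})"
  proof clarify
    fix c assume c: "\<forall>i\<in>{1..m}. c i \<le> b i"
    have "(\<Sum>i\<in>{1..m}. restrict c {1..m} i) = (\<Sum>i\<in>{1..m}. c i)" "Xpow m (restrict c {1..m}) = Xpow m c"
      unfolding Xpow_def by (auto intro: sum.cong)
    moreover have "restrict c {1..m} \<in> PiE {1..m} (\<lambda>i. {0..b i})"
      using c by auto
    ultimately show "(Wpow m (\<Sum>i\<in>{1..m}. c i), Xpow m c)
        \<in> (\<lambda>c. (Wpow m (\<Sum>i\<in>{1..m}. c i), Xpow m c)) ` PiE {1..m} (\<lambda>i. {0..b i})"
      by (metis (no_types, lifting) image_eqI)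
  qed
  then have "finite {(Wpow m (\<Sum>i\<in>{1..m}. c i), Xpow m c) | c. (\<exists>i\<in>{1..m}. c i \<noteq> 0) \<and> (\<forall>i\<in>{1..m}. c i \<le> b i)}"
    by (rule finite_subset) (simp add: finite_PiE)
  ultimately show ?thesis
    unfolding Gamma_pairs_def by simp
qed

lemma Gamma_pairsE:
  assumes "(M, N) \<in> Gamma_pairs m b"
  obtains (X) i j where "M = Xmon i" "N = Xmon j" "1 \<le> j" "j < i" "i \<le> m + 1"
  | (W) c where "M = Wpow m (\<Sum>i\<in>{1..m}. c i)" "N = Xpow m c" "1 \<le> (\<Sum>i\<in>{1..m}. c i)"
      "\<forall>i\<in>{1..m}. c i \<le> b i"
proof -
  have "1 \<le> (\<Sum>i\<in>{1..m}. c i)" if "i \<in> {1..m}" "c i \<noteq> 0" for c :: "nat \<Rightarrow> nat" and i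
    using member_le_sum[OF that(1), of c] that(2) by simp
  with assms that show ?thesis
    unfolding Gamma_pairs_def by blast
qed

lemma Xmon_pair_in_Gamma_pairs: "1 \<le> j \<Longrightarrow> j < i \<Longrightarrow> i \<le> m + 1 \<Longrightarrow> (Xmon i, Xmon j) \<in> Gamma_pairs m b"
  unfolding Gamma_pairs_def by blast

lemma Wpow_pair_in_Gamma_pairs:
  "\<exists>i\<in>{1..m}. c i \<noteq> 0 \<Longrightarrow> \<forall>i\<in>{1..m}. c i \<le> b i \<Longrightarrow> (Wpow m (\<Sum>i\<in>{1..m}. c i), Xpow m c) \<in> Gamma_pairs m b"
  unfolding Gamma_pairs_def by blast

lemma lex_less_at_top_XV:
  assumes "lookup B (XV i) < lookup A (XV i)" "\<And>l. i < l \<Longrightarrow> lookup B (XV l) = lookup A (XV l)"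
  shows "lex_less B A"
  unfolding lex_less_def
proof (intro exI[of _ "XV i"] conjI allI impI)
  fix u assume "var_gt u (XV i)"
  then obtain l where "u = XV l" "i < l"
    by (cases u) auto
  then show "lookup B u = lookup A u"
    using assms(2) by simp
qed (rule assms(1))

lemma Gamma_pair_rees_binomial:
  assumes "(M, N) \<in> Gamma_pairs m b"
  shows "rees_binomial m a b (Pcal_lead m a b M N) (Pcal_trail m a b M N)"
  using assms
proof (cases rule: Gamma_pairsE)
  case (X i j)
  then show ?thesis
    by (intro rees_binomial_Pcal lex_less_at_top_XV[of _ i])
      (auto simp: XW_mon_Xmon degXW_Xmon x_weight_Xmon Pcal_lead_def Pcal_trail_def lookup_Xmon)
next
  case (W c)
  let ?t = "\<Sum>i\<in>{1..m}. c i"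
  have "(\<Sum>i\<in>{1..m}. i * c i) \<le> (\<Sum>i\<in>{1..m}. m * c i)"
    by (rule sum_mono) auto
  also have "\<dots> = m * ?t"
    by (simp add: sum_distrib_left)
  also have "\<dots> < (m + 1) * ?t"
    using W(3) by simp
  finally have "x_weight m N < x_weight m M"
    using W by (simp add: x_weight_Xpow x_weight_Wpow)
  with W show ?thesis
    by (intro rees_binomial_Pcal lex_less_at_top_XV[of _ "m+1"])
      (auto simp: XW_mon_Wpow XW_mon_Xpow degXW_Wpow degXW_Xpow Pcal_lead_def Pcal_trail_def
        lookup_Wpow lookup_Xpow)
qed

lemma degXW_Gamma_pair:
  assumes "(M, N) \<in> Gamma_pairs m b" "1 \<le> (\<Sum>i\<in>{1..m}. b i)"
  shows "degXW m (Pcal_lead m a b M N) \<in> {1..\<Sum>i\<in>{1..m}. b i}"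
  using assms(1)
proof (cases rule: Gamma_pairsE)
  case (X i j)
  then show ?thesis
    using assms(2) by (simp add: Pcal_lead_def degXW_Xmon)
next
  case (W c)
  then have "(\<Sum>i\<in>{1..m}. c i) \<le> (\<Sum>i\<in>{1..m}. b i)"
    by (intro sum_mono) simp
  with W show ?thesis
    by (simp add: Pcal_lead_def degXW_Wpow)
qed

section \<open>Reducing fibre binomials\<close>

definition reduces_fibers :: "nat \<Rightarrow> (nat \<Rightarrow> nat) \<Rightarrow> (nat \<Rightarrow> nat) \<Rightarrow> 'k::comm_ring_1 mpoly set \<Rightarrow> bool" where
  "reduces_fibers m a b G \<longleftrightarrow> (\<forall>\<mu> \<nu>. S_mon m \<mu> \<longrightarrow> S_mon m \<nu> \<longrightarrow> rees_mon m a b \<mu> = rees_mon m a b \<nu>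
     \<longrightarrow> lex_less \<nu> \<mu> \<longrightarrow> (\<exists>A B. rees_binomial m a b A B \<and> monom A - monom B \<in> G \<and> mon_dvd A \<mu>))"

lemma mon_dvd_imp_eq_diff_add: "mon_dvd A \<mu> \<Longrightarrow> \<mu> = (\<mu> - A) + A"
  unfolding mon_dvd_def by (intro poly_mapping_eqI) (simp add: lookup_add lookup_minus)

lemma fiber_binomial_reduce_step:
  assumes G: "reduces_fibers m a b G"
    and "S_mon m \<mu>" "S_mon m \<nu>" "rees_mon m a b \<mu> = rees_mon m a b \<nu>" "lex_less \<nu> \<mu>"
  obtains \<mu>' where "S_mon m \<mu>'" "rees_mon m a b \<mu>' = rees_mon m a b \<nu>" "x_weight m \<mu>' < x_weight m \<mu>"
    "single \<mu> c - single \<mu>' (c::'k::comm_ring_1) \<in> gen_ideal (S_ring m) G"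
proof -
  obtain A B where AB: "rees_binomial m a b A B" "monom A - monom B \<in> G" "mon_dvd A \<mu>"
    using G assms(2-5) unfolding reduces_fibers_def by blast
  define Q where "Q = \<mu> - A"
  have \<mu>: "\<mu> = Q + A"
    unfolding Q_def by (rule mon_dvd_imp_eq_diff_add[OF AB(3)])
  have Q: "S_mon m Q"
    unfolding Q_def by (rule S_mon_diff[OF assms(2)])
  have B: "S_mon m B" "rees_mon m a b A = rees_mon m a b B" "x_weight m B < x_weight m A"
    using AB(1) unfolding rees_binomial_def by simp_all
  have "single Q c * (monom A - monom B) \<in> gen_ideal (S_ring m) G"
    using Q AB(2) by (intro gen_ideal_generator_mult) (simp add: S_ring_iff_S_mon)
  moreover have "single Q c * (monom A - monom B) = single \<mu> c - single (Q + B) c"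
    by (subst \<mu>) (simp add: monom_def right_diff_distrib mult_single)
  moreover have "rees_mon m a b (Q + B) = rees_mon m a b \<nu>"
    using assms(4) \<mu> B(2) by (metis rees_mon_add)
  moreover have "x_weight m (Q + B) < x_weight m \<mu>"
    using B(3) \<mu> by (metis x_weight_add add_less_cancel_left)
  ultimately show ?thesis
    using that S_mon_add[OF Q B(1)] by metis
qed

lemma fiber_binomial_in_gen_ideal:
  assumes G: "reduces_fibers m a b G"
  shows "S_mon m \<mu> \<Longrightarrow> S_mon m \<nu> \<Longrightarrow> rees_mon m a b \<mu> = rees_mon m a b \<nu> \<Longrightarrow>
    single \<mu> c - single \<nu> (c::'k::comm_ring_1) \<in> gen_ideal (S_ring m) G"
proof (induction "x_weight m \<mu> + x_weight m \<nu>" arbitrary: \<mu> \<nu> c rule: less_induct)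
  case less
  have reduce: "single \<mu>\<^sub>1 c' - single \<nu>\<^sub>1 c' \<in> gen_ideal (S_ring m) G"
    if "{\<mu>\<^sub>1, \<nu>\<^sub>1} = {\<mu>, \<nu>}" "lex_less \<nu>\<^sub>1 \<mu>\<^sub>1" for \<mu>\<^sub>1 \<nu>\<^sub>1 and c' :: 'k
  proof -
    have "S_mon m \<mu>\<^sub>1" "S_mon m \<nu>\<^sub>1" "rees_mon m a b \<mu>\<^sub>1 = rees_mon m a b \<nu>\<^sub>1"
      using less.prems that(1) by (auto simp: doubleton_eq_iff)
    from fiber_binomial_reduce_step[OF G this that(2)]
    obtain \<mu>' where \<mu>': "S_mon m \<mu>'" "rees_mon m a b \<mu>' = rees_mon m a b \<nu>\<^sub>1"
      "x_weight m \<mu>' < x_weight m \<mu>\<^sub>1" "single \<mu>\<^sub>1 c' - single \<mu>' c' \<in> gen_ideal (S_ring m) G" .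
    have "x_weight m \<mu>' + x_weight m \<nu>\<^sub>1 < x_weight m \<mu> + x_weight m \<nu>"
      using \<mu>'(3) that(1) by (auto simp: doubleton_eq_iff)
    then have "single \<mu>' c' - single \<nu>\<^sub>1 c' \<in> gen_ideal (S_ring m) G"
      using less.hyps \<mu>'(1,2) \<open>S_mon m \<nu>\<^sub>1\<close> by blast
    from gen_ideal_add[OF \<mu>'(4) this] show ?thesis
      by simp
  qed
  consider "\<mu> = \<nu>" | "lex_less \<nu> \<mu>" | "lex_less \<mu> \<nu>"
    using lex_less_total by blast
  then show ?case
  proof cases
    case 1
    then show ?thesis by (simp add: gen_ideal_zero)
  next
    case 2
    then show ?thesis using reduce by blast
  next
    case 3
    then have "single \<nu> (- c) - single \<mu> (- c) \<in> gen_ideal (S_ring m) G"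
      using reduce[of \<nu> \<mu>] by blast
    then show ?thesis
      by (simp add: single_uminus)
  qed
qed

lemma sum_single_lookup: "(\<Sum>\<mu>\<in>keys f. single \<mu> (lookup f \<mu>)) = f"
proof (rule poly_mapping_eqI)
  fix x
  show "lookup (\<Sum>\<mu>\<in>keys f. single \<mu> (lookup f \<mu>)) x = lookup f x"
    by (simp add: lookup_sum lookup_single when_def in_keys_iff)
qed

lemma single_sum: "single k (sum h A) = (\<Sum>x\<in>A. single k (h x))"
  by (induction A rule: infinite_finite_induct) (simp_all add: single_add)

lemma rees_poly_eq_0_iff_fiber_sums:
  "rees_poly m a b f = 0 \<longleftrightarrow> (\<forall>\<theta>. (\<Sum>\<mu>\<in>{\<mu> \<in> keys f. rees_mon m a b \<mu> = \<theta>}. lookup f \<mu>) = 0)"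
proof -
  have "lookup (rees_poly m a b f) \<theta> = (\<Sum>\<mu>\<in>{\<mu> \<in> keys f. rees_mon m a b \<mu> = \<theta>}. lookup f \<mu>)" for \<theta>
    unfolding lookup_rees_poly by (rule sum.inter_filter[symmetric]) simp
  then show ?thesis
    by (metis lookup_zero poly_mapping_eqI)
qed

text \<open>Collapsing every monomial of \<open>f\<close> onto a fixed representative of its fibre kills \<open>f\<close>, so
  \<open>f\<close> is a sum of fibre binomials.\<close>

lemma rees_ideal_subset_gen_ideal:
  assumes G: "reduces_fibers m a b G"
  shows "rees_ideal m a b \<subseteq> gen_ideal (S_ring m) (G :: 'k::comm_ring_1 mpoly set)"
proof
  fix f :: "'k mpoly"
  assume f: "f \<in> rees_ideal m a b"
  let ?K = "keys f"
  define rep where "rep \<theta> = (SOME \<nu>. \<nu> \<in> ?K \<and> rees_mon m a b \<nu> = \<theta>)" for \<theta>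
  have rep: "rep (rees_mon m a b \<mu>) \<in> ?K" "rees_mon m a b (rep (rees_mon m a b \<mu>)) = rees_mon m a b \<mu>"
    if "\<mu> \<in> ?K" for \<mu>
    using someI[of "\<lambda>\<nu>. \<nu> \<in> ?K \<and> rees_mon m a b \<nu> = rees_mon m a b \<mu>" \<mu>] that
    unfolding rep_def by auto
  have S: "S_mon m \<mu>" if "\<mu> \<in> ?K" for \<mu>
    using f that by (simp add: rees_ideal_iff S_ring_iff_S_mon)
  have fibers: "(\<Sum>\<mu>\<in>{\<mu> \<in> ?K. rees_mon m a b \<mu> = \<theta>}. lookup f \<mu>) = 0" for \<theta>
    using f by (simp add: rees_ideal_iff rees_poly_eq_0_iff_fiber_sums)
  have "(\<Sum>\<mu>\<in>?K. single (rep (rees_mon m a b \<mu>)) (lookup f \<mu>))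
      = (\<Sum>\<theta>\<in>rees_mon m a b ` ?K. \<Sum>\<mu>\<in>{\<mu> \<in> ?K. rees_mon m a b \<mu> = \<theta>}. single (rep (rees_mon m a b \<mu>)) (lookup f \<mu>))"
    by (rule sum.group[symmetric]) auto
  also have "\<dots> = (\<Sum>\<theta>\<in>rees_mon m a b ` ?K. \<Sum>\<mu>\<in>{\<mu> \<in> ?K. rees_mon m a b \<mu> = \<theta>}. single (rep \<theta>) (lookup f \<mu>))"
    by (intro sum.cong) auto
  also have "\<dots> = (\<Sum>\<theta>\<in>rees_mon m a b ` ?K. single (rep \<theta>) (\<Sum>\<mu>\<in>{\<mu> \<in> ?K. rees_mon m a b \<mu> = \<theta>}. lookup f \<mu>))"
    by (simp add: single_sum)
  also have "\<dots> = 0"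
    by (simp add: fibers)
  finally have collapse: "(\<Sum>\<mu>\<in>?K. single (rep (rees_mon m a b \<mu>)) (lookup f \<mu>)) = 0" .
  have "f = (\<Sum>\<mu>\<in>?K. single \<mu> (lookup f \<mu>) - single (rep (rees_mon m a b \<mu>)) (lookup f \<mu>))"
    using collapse by (simp add: sum_subtractf sum_single_lookup)
  also have "\<dots> \<in> gen_ideal (S_ring m) G"
    using S rep by (intro gen_ideal_sum fiber_binomial_in_gen_ideal[OF G]) auto
  finally show "f \<in> gen_ideal (S_ring m) G" .
qed

lemma exists_fiber_partner:
  assumes "f \<in> rees_ideal m a b" "\<mu> \<in> keys f"
  shows "\<exists>\<nu>\<in>keys f. \<nu> \<noteq> \<mu> \<and> rees_mon m a b \<nu> = rees_mon m a b \<mu>"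
proof (rule ccontr)
  assume "\<not> ?thesis"
  then have "{\<nu> \<in> keys f. rees_mon m a b \<nu> = rees_mon m a b \<mu>} = {\<mu>}"
    using assms(2) by blast
  then have "lookup f \<mu> = (\<Sum>\<nu>\<in>{\<nu> \<in> keys f. rees_mon m a b \<nu> = rees_mon m a b \<mu>}. lookup f \<nu>)"
    by simp
  also have "\<dots> = 0"
    using assms(1) by (simp add: rees_ideal_iff rees_poly_eq_0_iff_fiber_sums)
  finally show False
    using assms(2) by (simp add: in_keys_iff)
qed

lemma lead_mon_dvd_of_reduces_fibers:
  fixes f :: "'k::comm_ring_1 mpoly" and G :: "'k mpoly set"
  assumes G: "reduces_fibers m a b G" and f: "f \<in> rees_ideal m a b" "f \<noteq> 0"
  shows "\<exists>g\<in>G. g \<noteq> 0 \<and> mon_dvd (lead_mon g) (lead_mon f)"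
proof -
  let ?M = "lead_mon f"
  obtain \<nu> where \<nu>: "\<nu> \<in> keys f" "\<nu> \<noteq> ?M" "rees_mon m a b \<nu> = rees_mon m a b ?M"
    using exists_fiber_partner[OF f(1) lead_mon_greatest(1)[OF f(2)]] by blast
  have "lex_less \<nu> ?M"
    using lead_mon_greatest(2)[OF f(2)] \<nu> by blast
  moreover have "S_mon m ?M" "S_mon m \<nu>"
    using f(1) lead_mon_greatest(1)[OF f(2)] \<nu>(1) by (auto simp: rees_ideal_iff S_ring_iff_S_mon)
  ultimately obtain A B where AB: "rees_binomial m a b A B" "monom A - monom B \<in> G" "mon_dvd A ?M"
    using G \<nu>(3) unfolding reduces_fibers_def by metis
  then have "lex_less B A"
    unfolding rees_binomial_def by simp
  have "lead_mon (monom A - monom B :: 'k mpoly) = A"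
    using \<open>lex_less B A\<close> by (rule lead_mon_monom_diff)
  moreover have "monom A - monom B \<noteq> (0 :: 'k mpoly)"
    using \<open>lex_less B A\<close> lex_less_irrefl by (intro monom_diff_neq_0) blast
  ultimately show ?thesis
    using AB(3) by (intro bexI[OF _ AB(2)]) simp
qed

section \<open>Leading monomials of fibre binomials\<close>

lemma exists_bounded_summands:
  assumes "finite I" "t \<le> sum f I"
  shows "\<exists>c. (\<forall>k. c k \<le> f k) \<and> sum c I = (t::nat)"
  using assms
proof (induction I arbitrary: t rule: finite_induct)
  case empty
  then show ?case by (intro exI[of _ "\<lambda>_. 0"]) simp
next
  case (insert i I)
  define t\<^sub>i where "t\<^sub>i = min (f i) t"
  have "t - t\<^sub>i \<le> sum f I"
    using insert.prems insert.hyps by (simp add: t\<^sub>i_def)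
  then obtain c where c: "\<forall>k. c k \<le> f k" "sum c I = t - t\<^sub>i"
    using insert.IH by blast
  have "sum (c(i := t\<^sub>i)) I = sum c I"
    using insert.hyps(2) by (intro sum.cong) auto
  then have "sum (c(i := t\<^sub>i)) (insert i I) = t"
    using insert.hyps c(2) by (simp add: t\<^sub>i_def)
  moreover have "\<forall>k. (c(i := t\<^sub>i)) k \<le> f k"
    using c(1) by (simp add: t\<^sub>i_def)
  ultimately show ?case by blast
qed

text \<open>If \<open>t \<le> \<Sum>\<^sub>k \<lfloor>(\<alpha>\<^sub>k + t b\<^sub>k) / a\<^sub>k\<rfloor>\<close>, then subtracting \<open>|b|\<close> from \<open>t\<close> lowers each summand
  by at most \<open>b\<^sub>k\<close> (as \<open>|b| \<le> a\<^sub>k\<close>), so the inequality survives; descend until \<open>t \<le> |b|\<close>.\<close>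

lemma exists_small_solution:
  fixes \<alpha> a b :: "nat \<Rightarrow> nat"
  assumes "finite K" "\<forall>k\<in>K. sum b K \<le> a k" "\<forall>k\<in>K. 0 < a k" "1 \<le> sum b K"
  shows "1 \<le> t \<Longrightarrow> t \<le> (\<Sum>k\<in>K. (\<alpha> k + t * b k) div a k) \<Longrightarrow>
    \<exists>t'. 1 \<le> t' \<and> t' \<le> t \<and> t' \<le> sum b K \<and> t' \<le> (\<Sum>k\<in>K. (\<alpha> k + t' * b k) div a k)"
proof (induction t rule: less_induct)
  case (less t)
  show ?case
  proof (cases "t \<le> sum b K")
    case False
    define t' where "t' = t - sum b K"
    have t: "t = t' + sum b K" "1 \<le> t'" "t' < t"
      using False assms(4) by (auto simp: t'_def)
    have "(\<alpha> k + t * b k) div a k \<le> (\<alpha> k + t' * b k) div a k + b k" if k: "k \<in> K" for k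
    proof -
      have "sum b K * b k \<le> a k * b k"
        using assms(2) k by simp
      then have "\<alpha> k + t * b k \<le> \<alpha> k + t' * b k + a k * b k"
        unfolding t(1) by (simp add: algebra_simps)
      then have "(\<alpha> k + t * b k) div a k \<le> (\<alpha> k + t' * b k + a k * b k) div a k"
        by (rule div_le_mono)
      also have "\<dots> = (\<alpha> k + t' * b k) div a k + b k"
        using assms(3) k by simp
      finally show ?thesis .
    qed
    then have "(\<Sum>k\<in>K. (\<alpha> k + t * b k) div a k) \<le> (\<Sum>k\<in>K. (\<alpha> k + t' * b k) div a k) + sum b K"
      by (simp add: sum.distrib[symmetric] sum_mono)
    then have "t' \<le> (\<Sum>k\<in>K. (\<alpha> k + t' * b k) div a k)"
      using less.prems(2) t(1) by linarith
    then obtain t'' where "1 \<le> t''" "t'' \<le> t'" "t'' \<le> sum b K"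
      "t'' \<le> (\<Sum>k\<in>K. (\<alpha> k + t'' * b k) div a k)"
      using less.IH[OF t(3) t(2)] by blast
    then show ?thesis
      using t(3) by (intro exI[of _ t'']) simp
  qed (use less.prems in \<open>intro exI[of _ t], simp\<close>)
qed

lemma div_le_of_lt:
  fixes x a b t :: nat
  assumes "x < a" "t \<le> a"
  shows "(x + t * b) div a \<le> b"
proof -
  have "t * b \<le> a * b"
    using assms(2) by simp
  moreover have "(b + 1) * a = a * b + a"
    by simp
  ultimately have "x + t * b < (b + 1) * a"
    using assms(1) by linarith
  then have "(x + t * b) div a < b + 1"
    by (rule less_mult_imp_div_less)
  then show ?thesis
    by simp
qed

lemma le_div_add_of_eq:
  fixes x a d e g :: nat
  assumes "0 < a" "x + e * a = g + d * a"
  shows "d \<le> x div a + e"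
proof -
  have "d = (d * a) div a"
    using assms(1) by simp
  also have "\<dots> \<le> (g + d * a) div a"
    by (rule div_le_mono) simp
  also have "\<dots> = (x + e * a) div a"
    using assms(2) by simp
  also have "\<dots> = x div a + e"
    using assms(1) by simp
  finally show ?thesis .
qed

lemma mon_dvd_Pcal_lead:
  assumes "XW_mon m M"
    and "\<forall>k\<in>{1..m}. psi_exp m a b N k - min (psi_exp m a b M k) (psi_exp m a b N k) \<le> lookup \<mu> (TV k)"
    and "\<forall>l. lookup M (XV l) \<le> lookup \<mu> (XV l)"
  shows "mon_dvd (Pcal_lead m a b M N) \<mu>"
  unfolding mon_dvd_def Pcal_lead_def
proof
  have "lookup M ZV = 0"
    by (rule XW_mon_lookup_eq_0[OF assms(1)]) auto
  fix v
  show "lookup (tmon m (\<lambda>k. psi_exp m a b N k - min (psi_exp m a b M k) (psi_exp m a b N k)) + M) v \<le> lookup \<mu> v"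
    using assms \<open>lookup M ZV = 0\<close> by (cases v) (simp_all add: lookup_tmon_add)
qed

lemma mon_dvd_Pcal_lead_Xmon:
  assumes "j \<in> {1..m}" "i \<in> {1..m+1}" "i \<noteq> j"
    and "a j - psi_exp m a b (Xmon i) j \<le> lookup \<mu> (TV j)" "1 \<le> lookup \<mu> (XV i)"
  shows "mon_dvd (Pcal_lead m a b (Xmon i) (Xmon j)) \<mu>"
proof (rule mon_dvd_Pcal_lead)
  show "\<forall>k\<in>{1..m}. psi_exp m a b (Xmon j) k - min (psi_exp m a b (Xmon i) k) (psi_exp m a b (Xmon j) k)
      \<le> lookup \<mu> (TV k)"
    using assms(1,3,4) by (auto simp: psi_exp_Xmon)
qed (use assms(2,5) in \<open>simp_all add: XW_mon_Xmon lookup_Xmon\<close>)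

lemma mon_dvd_Pcal_lead_Wpow:
  assumes "\<forall>k\<in>{1..m}. c k * a k \<le> lookup \<mu> (TV k) + (\<Sum>i\<in>{1..m}. c i) * b k"
    and "(\<Sum>i\<in>{1..m}. c i) \<le> lookup \<mu> (XV (m+1))"
  shows "mon_dvd (Pcal_lead m a b (Wpow m (\<Sum>i\<in>{1..m}. c i)) (Xpow m c)) \<mu>"
proof (rule mon_dvd_Pcal_lead)
  show "\<forall>k\<in>{1..m}. psi_exp m a b (Xpow m c) k
      - min (psi_exp m a b (Wpow m (\<Sum>i\<in>{1..m}. c i)) k) (psi_exp m a b (Xpow m c) k) \<le> lookup \<mu> (TV k)"
    using assms(1) by (auto simp: psi_exp_Xpow psi_exp_Wpow min_def)
qed (use assms(2) in \<open>simp_all add: XW_mon_Wpow lookup_Wpow\<close>)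

lemma lex_less_imp_W_le:
  assumes "S_mon m \<mu>" "S_mon m \<nu>" "lex_less \<nu> \<mu>"
  shows "lookup \<nu> (XV (m+1)) \<le> lookup \<mu> (XV (m+1))"
proof -
  obtain x where x: "lookup \<nu> x < lookup \<mu> x" "\<forall>u. var_gt u x \<longrightarrow> lookup \<nu> u = lookup \<mu> u"
    using assms(3) unfolding lex_less_def by blast
  consider "x = XV (m+1)" | "var_gt (XV (m+1)) x" | "var_gt x (XV (m+1))"
    using var_gt_total by blast
  then show ?thesis
  proof cases
    case 3
    then obtain l where "x = XV l" "m + 1 < l"
      by (cases x) auto
    then have "lookup \<mu> x = 0"
      using S_mon_lookup_eq_0[OF assms(1)] by simp
    with x(1) show ?thesis by simp
  qed (use x in auto)
qed

lemma lex_less_same_W_top_X: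
  assumes "S_mon m \<mu>" "S_mon m \<nu>" "rees_mon m a b \<mu> = rees_mon m a b \<nu>" "lex_less \<nu> \<mu>"
    and "lookup \<nu> (XV (m+1)) = lookup \<mu> (XV (m+1))"
  obtains i where "i \<in> {1..m}" "lookup \<nu> (XV i) < lookup \<mu> (XV i)"
    "\<And>l. i < l \<Longrightarrow> lookup \<nu> (XV l) = lookup \<mu> (XV l)"
proof -
  obtain x where x: "lookup \<nu> x < lookup \<mu> x" "\<forall>u. var_gt u x \<longrightarrow> lookup \<nu> u = lookup \<mu> u"
    using assms(4) unfolding lex_less_def by blast
  have valid: "valid_var m x"
    using x(1) S_mon_lookup_eq_0[OF assms(1)] by fastforce
  have "\<exists>i. x = XV i \<and> i \<in> {1..m}"
  proof (cases x)
    case (TV k)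
    then have "psi_exp m a b \<nu> k = psi_exp m a b \<mu> k"
      using x(2) by (simp add: psi_exp_def)
    moreover have "k \<in> {1..m}"
      using valid TV by simp
    from rees_mon_eq_imp_T_exponent_eq[OF assms(1-3) this] show ?thesis
      using calculation x(1) TV by simp
  next
    case (XV l)
    then show ?thesis
      using valid x(1) assms(5) by (cases "l = m + 1") auto
  qed (use valid in simp)
  with x that show ?thesis by auto
qed

lemma same_W_Gamma_pair_dvd:
  assumes "\<forall>k\<in>{1..m}. 0 < a k"
    and "S_mon m \<mu>" "S_mon m \<nu>" "rees_mon m a b \<mu> = rees_mon m a b \<nu>" "lex_less \<nu> \<mu>"
    and W: "lookup \<nu> (XV (m+1)) = lookup \<mu> (XV (m+1))"
  shows "\<exists>(M, N)\<in>Gamma_pairs m b. mon_dvd (Pcal_lead m a b M N) \<mu>"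
proof -
  obtain i where i: "i \<in> {1..m}" "lookup \<nu> (XV i) < lookup \<mu> (XV i)"
    "\<And>l. i < l \<Longrightarrow> lookup \<nu> (XV l) = lookup \<mu> (XV l)"
    using lex_less_same_W_top_X[OF assms(2-5) W] by blast
  have "\<exists>j\<in>{1..m}. j < i \<and> lookup \<mu> (XV j) < lookup \<nu> (XV j)"
  proof (rule ccontr)
    assume "\<not> ?thesis"
    then have "\<forall>j\<in>{1..m}. lookup \<nu> (XV j) \<le> lookup \<mu> (XV j)"
      using i by (metis linorder_neqE_nat not_le order.strict_implies_order)
    then have "(\<Sum>j\<in>{1..m}. lookup \<nu> (XV j)) < (\<Sum>j\<in>{1..m}. lookup \<mu> (XV j))"
      using i(1,2) by (intro sum_strict_mono_ex1) auto
    moreover have "degXW m \<mu> = degXW m \<nu>"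
      by (rule rees_mon_eq_imp_degXW_eq[OF assms(2-4)])
    ultimately show False
      using W by (simp add: degXW_def)
  qed
  then obtain j where j: "j \<in> {1..m}" "j < i" "lookup \<mu> (XV j) < lookup \<nu> (XV j)"
    by blast
  have "lookup \<mu> (XV j) * a j + a j \<le> lookup \<nu> (XV j) * a j"
    using j(3) mult_le_mono1[of "Suc (lookup \<mu> (XV j))" "lookup \<nu> (XV j)" "a j"] by simp
  then have "a j \<le> lookup \<mu> (TV j)"
    using rees_mon_eq_imp_T_exponent_eq[OF assms(2-4) j(1)] W by (simp add: psi_exp_def)
  then have "mon_dvd (Pcal_lead m a b (Xmon i) (Xmon j)) \<mu>"
    using i j by (intro mon_dvd_Pcal_lead_Xmon) (auto simp: psi_exp_Xmon)
  moreover have "(Xmon i, Xmon j) \<in> Gamma_pairs m b"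
    using i j by (intro Xmon_pair_in_Gamma_pairs) auto
  ultimately show ?thesis by blast
qed

lemma large_T_Gamma_pair_dvd:
  assumes "lookup \<nu> (XV (m+1)) < lookup \<mu> (XV (m+1))" "k \<in> {1..m}" "a k - b k \<le> lookup \<mu> (TV k)"
  shows "\<exists>(M, N)\<in>Gamma_pairs m b. mon_dvd (Pcal_lead m a b M N) \<mu>"
proof -
  have "mon_dvd (Pcal_lead m a b (Xmon (m+1)) (Xmon k)) \<mu>"
    using assms by (intro mon_dvd_Pcal_lead_Xmon) (auto simp: psi_exp_Xmon)
  moreover have "(Xmon (m+1), Xmon k) \<in> Gamma_pairs m b"
    using assms(2) by (intro Xmon_pair_in_Gamma_pairs) auto
  ultimately show ?thesis by blast
qed

lemma W_drop_le_sum_div: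
  assumes "\<forall>k\<in>{1..m}. 0 < a k"
    and "S_mon m \<mu>" "S_mon m \<nu>" "rees_mon m a b \<mu> = rees_mon m a b \<nu>"
    and "lookup \<nu> (XV (m+1)) \<le> lookup \<mu> (XV (m+1))"
  defines "d \<equiv> lookup \<mu> (XV (m+1)) - lookup \<nu> (XV (m+1))"
  shows "d \<le> (\<Sum>k\<in>{1..m}. (lookup \<mu> (TV k) + d * b k) div a k)"
proof -
  have "lookup \<nu> (XV k) \<le> (lookup \<mu> (TV k) + d * b k) div a k + lookup \<mu> (XV k)" if k: "k \<in> {1..m}" for k
  proof (rule le_div_add_of_eq)
    show "0 < a k"
      using assms(1) k by blast
    have "lookup \<mu> (XV (m+1)) * b k = lookup \<nu> (XV (m+1)) * b k + d * b k"
      using assms(5) by (simp add: d_def algebra_simps)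
    then show "lookup \<mu> (TV k) + d * b k + lookup \<mu> (XV k) * a k = lookup \<nu> (TV k) + lookup \<nu> (XV k) * a k"
      using rees_mon_eq_imp_T_exponent_eq[OF assms(2-4) k] by (simp add: psi_exp_def)
  qed
  then have "(\<Sum>k\<in>{1..m}. lookup \<nu> (XV k))
      \<le> (\<Sum>k\<in>{1..m}. (lookup \<mu> (TV k) + d * b k) div a k + lookup \<mu> (XV k))"
    by (rule sum_mono)
  also have "\<dots> = (\<Sum>k\<in>{1..m}. (lookup \<mu> (TV k) + d * b k) div a k) + (\<Sum>k\<in>{1..m}. lookup \<mu> (XV k))"
    by (rule sum.distrib)
  finally have "(\<Sum>k\<in>{1..m}. lookup \<nu> (XV k))
      \<le> (\<Sum>k\<in>{1..m}. (lookup \<mu> (TV k) + d * b k) div a k) + (\<Sum>k\<in>{1..m}. lookup \<mu> (XV k))" .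
  moreover have "degXW m \<mu> = degXW m \<nu>"
    by (rule rees_mon_eq_imp_degXW_eq[OF assms(2-4)])
  ultimately show ?thesis
    using assms(5) by (simp add: degXW_def d_def)
qed

lemma small_T_Gamma_pair_dvd:
  assumes ab: "\<forall>i\<in>{1..m}. b i < a i" and ba: "\<forall>i\<in>{1..m}. (\<Sum>j\<in>{1..m}. b j) \<le> a i"
    and b1: "1 \<le> (\<Sum>j\<in>{1..m}. b j)"
    and fiber: "S_mon m \<mu>" "S_mon m \<nu>" "rees_mon m a b \<mu> = rees_mon m a b \<nu>"
    and W: "lookup \<nu> (XV (m+1)) < lookup \<mu> (XV (m+1))"
    and small: "\<forall>k\<in>{1..m}. lookup \<mu> (TV k) < a k - b k"
  shows "\<exists>(M, N)\<in>Gamma_pairs m b. mon_dvd (Pcal_lead m a b M N) \<mu>"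
proof -
  let ?\<alpha> = "\<lambda>k. lookup \<mu> (TV k)"
  define d where "d = lookup \<mu> (XV (m+1)) - lookup \<nu> (XV (m+1))"
  have a_pos: "\<forall>k\<in>{1..m}. 0 < a k"
    using ab by fastforce
  have "1 \<le> d"
    using W by (simp add: d_def)
  moreover have "d \<le> (\<Sum>k\<in>{1..m}. (?\<alpha> k + d * b k) div a k)"
    unfolding d_def using W by (intro W_drop_le_sum_div[OF a_pos fiber]) simp
  ultimately have "\<exists>t. 1 \<le> t \<and> t \<le> d \<and> t \<le> (\<Sum>j\<in>{1..m}. b j)
      \<and> t \<le> (\<Sum>k\<in>{1..m}. (?\<alpha> k + t * b k) div a k)"
    by (rule exists_small_solution[OF finite_atLeastAtMost ba a_pos b1])
  then obtain t where t: "1 \<le> t" "t \<le> d" "t \<le> (\<Sum>j\<in>{1..m}. b j)"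
      "t \<le> (\<Sum>k\<in>{1..m}. (?\<alpha> k + t * b k) div a k)"
    by blast
  then obtain c where c: "\<forall>k. c k \<le> (?\<alpha> k + t * b k) div a k" "(\<Sum>i\<in>{1..m}. c i) = t"
    using exists_bounded_summands[of "{1..m}" t] by auto
  have "\<forall>i\<in>{1..m}. c i \<le> b i"
  proof
    fix i assume i: "i \<in> {1..m}"
    have "?\<alpha> i < a i"
      using small i by fastforce
    moreover have "t \<le> a i"
      using ba i t(3) by fastforce
    ultimately have "(?\<alpha> i + t * b i) div a i \<le> b i"
      by (rule div_le_of_lt)
    with c(1) show "c i \<le> b i"
      by (meson order.trans)
  qed
  moreover have "\<exists>i\<in>{1..m}. c i \<noteq> 0"
    using c(2) t(1) by (metis not_one_le_zero sum.neutral)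
  moreover have "c k * a k \<le> ?\<alpha> k + t * b k" for k
  proof -
    have "c k * a k \<le> (?\<alpha> k + t * b k) div a k * a k"
      using c(1) by (intro mult_le_mono1) blast
    also have "\<dots> \<le> ?\<alpha> k + t * b k"
      by (rule div_times_less_eq_dividend)
    finally show ?thesis .
  qed
  then have "mon_dvd (Pcal_lead m a b (Wpow m (\<Sum>i\<in>{1..m}. c i)) (Xpow m c)) \<mu>"
    using c(2) t(2) by (intro mon_dvd_Pcal_lead_Wpow) (auto simp: d_def)
  ultimately show ?thesis
    using Wpow_pair_in_Gamma_pairs by blast
qed

lemma fiber_lead_dvd_Gamma_pair:
  assumes ab: "\<forall>i\<in>{1..m}. b i < a i" and ba: "\<forall>i\<in>{1..m}. (\<Sum>j\<in>{1..m}. b j) \<le> a i"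
    and b1: "1 \<le> (\<Sum>j\<in>{1..m}. b j)"
    and fiber: "S_mon m \<mu>" "S_mon m \<nu>" "rees_mon m a b \<mu> = rees_mon m a b \<nu>" and "lex_less \<nu> \<mu>"
  shows "\<exists>(M, N)\<in>Gamma_pairs m b. mon_dvd (Pcal_lead m a b M N) \<mu>"
proof (cases "lookup \<nu> (XV (m+1)) = lookup \<mu> (XV (m+1))")
  case True
  moreover have "\<forall>k\<in>{1..m}. 0 < a k"
    using ab by fastforce
  ultimately show ?thesis
    using same_W_Gamma_pair_dvd fiber \<open>lex_less \<nu> \<mu>\<close> by blast
next
  case False
  with lex_less_imp_W_le[OF fiber(1,2) \<open>lex_less \<nu> \<mu>\<close>]
  have W: "lookup \<nu> (XV (m+1)) < lookup \<mu> (XV (m+1))"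
    by simp
  show ?thesis
  proof (cases "\<exists>k\<in>{1..m}. a k - b k \<le> lookup \<mu> (TV k)")
    case True
    with W show ?thesis
      using large_T_Gamma_pair_dvd by blast
  next
    case False
    then have "\<forall>k\<in>{1..m}. lookup \<mu> (TV k) < a k - b k"
      by (simp add: not_le)
    with W show ?thesis
      by (rule small_T_Gamma_pair_dvd[OF ab ba b1 fiber])
  qed
qed

lemma reduces_fibers_Gamma:
  assumes "\<forall>i\<in>{1..m}. b i < a i" "\<forall>i\<in>{1..m}. (\<Sum>j\<in>{1..m}. b j) \<le> a i" "1 \<le> (\<Sum>j\<in>{1..m}. b j)"
  shows "reduces_fibers m a b (Gamma0 m a b \<union> Gamma3 m a b :: 'k::comm_ring_1 mpoly set)"
  unfolding reduces_fibers_def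
proof (intro allI impI)
  fix \<mu> \<nu>
  assume "S_mon m \<mu>" "S_mon m \<nu>" "rees_mon m a b \<mu> = rees_mon m a b \<nu>" "lex_less \<nu> \<mu>"
  then obtain M N where MN: "(M, N) \<in> Gamma_pairs m b" "mon_dvd (Pcal_lead m a b M N) \<mu>"
    using fiber_lead_dvd_Gamma_pair[OF assms] by blast
  have "monom (Pcal_lead m a b M N) - monom (Pcal_trail m a b M N) \<in> (Gamma0 m a b \<union> Gamma3 m a b :: 'k mpoly set)"
    unfolding Gamma_eq_Pcal_image Pcal_eq[symmetric] using MN(1) by (rule rev_image_eqI) simp
  with MN Gamma_pair_rees_binomial show "\<exists>A B. rees_binomial m a b A B
      \<and> monom A - monom B \<in> (Gamma0 m a b \<union> Gamma3 m a b :: 'k mpoly set) \<and> mon_dvd A \<mu>"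
    by blast
qed

lemma finite_Gamma: "finite (Gamma0 m a b \<union> Gamma3 m a b)"
  unfolding Gamma_eq_Pcal_image by (rule finite_imageI[OF finite_Gamma_pairs])

lemma Gamma_subset_graded_parts:
  assumes "1 \<le> (\<Sum>i\<in>{1..m}. b i)"
  shows "Gamma0 m a b \<union> Gamma3 m a b
    \<subseteq> (\<Union>d\<in>{1..\<Sum>i\<in>{1..m}. b i}. graded_part m (rees_ideal m a b :: 'k::comm_ring_1 mpoly set) d)"
proof
  fix g :: "'k mpoly"
  assume "g \<in> Gamma0 m a b \<union> Gamma3 m a b"
  then obtain M N where MN: "(M, N) \<in> Gamma_pairs m b" "g = Pcal m a b M N"
    unfolding Gamma_eq_Pcal_image by (auto elim!: imageE split: prod.splits)
  then have "g \<in> graded_part m (rees_ideal m a b) (degXW m (Pcal_lead m a b M N))"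
    using rees_binomial_in_graded_part[OF Gamma_pair_rees_binomial] by (simp add: Pcal_eq)
  with degXW_Gamma_pair[OF MN(1) assms] show "g \<in> (\<Union>d\<in>{1..\<Sum>i\<in>{1..m}. b i}. graded_part m (rees_ideal m a b) d)"
    by blast
qed

lemma reltype_le:
  assumes "(rees_ideal m a b :: 'k::comm_ring_1 mpoly set)
    = gen_ideal (S_ring m) (\<Union>d\<in>{1..s}. graded_part m (rees_ideal m a b) d)"
  shows "reltype m a b TYPE('k) \<le> enat s"
  unfolding reltype_def by (rule INF_lower) (use assms in simp)

theorem theorem4p1:
  fixes m :: nat and a b :: "nat \<Rightarrow> nat"
  assumes "m \<ge> 3"
    and "\<forall>i\<in>{1..m}. b i < a i"
    and "card {i\<in>{1..m}. b i \<noteq> 0} \<ge> 2"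
    and "\<forall>i\<in>{1..m}. (\<Sum>j\<in>{1..m}. b j) \<le> a i"
  shows "is_groebner_basis (Gamma0 m a b \<union> Gamma3 m a b)
           (rees_ideal m a b :: ('k::field) mpoly set)
         \<and> reltype m a b TYPE('k) \<le> enat (\<Sum>i\<in>{1..m}. b i)"
proof -
  have "{i\<in>{1..m}. b i \<noteq> 0} \<noteq> {}"
  proof
    assume "{i\<in>{1..m}. b i \<noteq> 0} = {}"
    with assms(3) show False
      by (simp only: card.empty)
  qed
  then obtain i where i: "i \<in> {1..m}" "b i \<noteq> 0"
    by blast
  have b1: "1 \<le> (\<Sum>j\<in>{1..m}. b j)"
    using member_le_sum[OF i(1), of b] i(2) by simp
  let ?G = "Gamma0 m a b \<union> Gamma3 m a b :: 'k mpoly set"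
  let ?L = "rees_ideal m a b :: 'k mpoly set"
  let ?U = "\<Union>d\<in>{1..\<Sum>j\<in>{1..m}. b j}. graded_part m ?L d"
  have red: "reduces_fibers m a b ?G"
    by (rule reduces_fibers_Gamma[OF assms(2,4) b1])
  have GU: "?G \<subseteq> ?U"
    by (rule Gamma_subset_graded_parts[OF b1])
  have UL: "?U \<subseteq> ?L"
    unfolding graded_part_def by blast
  have GL: "?G \<subseteq> ?L"
    using GU UL by (rule order.trans)
  have "is_groebner_basis ?G ?L"
    unfolding is_groebner_basis_def
    by (intro conjI finite_Gamma GL ballI impI lead_mon_dvd_of_reduces_fibers[OF red])
  moreover have "?L = gen_ideal (S_ring m) ?U"
  proof
    show "?L \<subseteq> gen_ideal (S_ring m) ?U"
      using rees_ideal_subset_gen_ideal[OF red] gen_ideal_mono[OF GU] by (rule order.trans)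
  qed (rule gen_ideal_subset_rees_ideal[OF UL])
  ultimately show ?thesis
    by (simp add: reltype_le)
qed

end
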